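(* Let $\mathcal P$ be a finite-dimensional Poisson $n$-Lie algebra over an algebraically closed field of characteristic zero. Then $\mathcal P$ is solvable if and only if the $n$-Lie algebra $\mathcal P_L=(\mathcal P,[-,\dots,-])$ is solvable and the associative algebra $\mathcal P_A=(\mathcal P,\cdot)$ is nilpotent.
   Context: A Poisson $n$-Lie algebra is a commutative associative algebra $(\mathcal P,\cdot)$ with an $n$-linear skew-symmetric bracket satisfying the fundamental identity $[x_1,\dots,x_{n-1},[y_1,\dots,y_n]]=\sum_{i=1}^n[y_1,\dots,[x_1,\dots,x_{n-1},y_i],\dots,y_n]$ and the Leibniz rule $[y\cdot z,x_2,\dots,x_n]=y\cdot[z,x_2,\dots,x_n]+z\cdot[y,x_2,\dots,x_n]$. Products/brackets of subspaces are linear spans. $\mathcal P$ is solvable if $\mathcal P^{(s)}=0$ for some $s$, where $\mathcal P^{(1)}=\mathcal P$, $\mathcal P^{(k+1)}=[\mathcal P^{(k)},\mathcal P^{(k)},\mathcal P,\dots,\mathcal P]+\mathcal P^{(k)}\cdot\mathcal P^{(k)}$. $\mathcal P_L$ is solvable if $L^{(s)}=0$ for some $s$, where $L^{(1)}=\mathcal P$, $L^{(k+1)}=[L^{(k)},L^{(k)},\mathcal P,\dots,\mathcal P]$. $\mathcal P_A$ is nilpotent if all products of some fixed number of elements vanish. *)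

theory Defs
  imports Main "HOL-Computational_Algebra.Polynomial"
begin

definition alg_closed :: "'k::field itself \<Rightarrow> bool" where
  "alg_closed _ \<longleftrightarrow> (\<forall>p::'k poly. degree p > 0 \<longrightarrow> (\<exists>x. poly p x = 0))"

definition poisson_nLie ::
  "('k::field \<Rightarrow> 'v::ab_group_add \<Rightarrow> 'v) \<Rightarrow> ('v \<Rightarrow> 'v \<Rightarrow> 'v) \<Rightarrow> ('v list \<Rightarrow> 'v) \<Rightarrow> nat \<Rightarrow> bool"
where
  "poisson_nLie scale mul br n \<longleftrightarrow>
     vector_space scale \<and>
     \<comment> \<open>commutative associative algebra (bilinear product)\<close>
     (\<forall>x. Vector_Spaces.linear scale scale (mul x)) \<and>
     (\<forall>x y. mul x y = mul y x) \<and>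
     (\<forall>x y z. mul (mul x y) z = mul x (mul y z)) \<and>
     \<comment> \<open>n-linear bracket\<close>
     (\<forall>xs i. length xs = n \<longrightarrow> i < n \<longrightarrow>
        Vector_Spaces.linear scale scale (\<lambda>x. br (xs[i := x]))) \<and>
     \<comment> \<open>skew-symmetry\<close>
     (\<forall>xs i j. length xs = n \<longrightarrow> i < n \<longrightarrow> j < n \<longrightarrow> i \<noteq> j \<longrightarrow>
        br (xs[i := xs ! j, j := xs ! i]) = - br xs) \<and>
     \<comment> \<open>fundamental identity\<close>
     (\<forall>xs ys. length xs = n - 1 \<longrightarrow> length ys = n \<longrightarrow>
        br (xs @ [br ys]) = (\<Sum>i<n. br (ys[i := br (xs @ [ys ! i])]))) \<and>
     \<comment> \<open>Leibniz rule\<close>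
     (\<forall>y z xs. length xs = n - 1 \<longrightarrow>
        br (mul y z # xs) = mul y (br (z # xs)) + mul z (br (y # xs)))"

text \<open>Derived series of the Poisson n-Lie algebra; index 0 corresponds to the paper's index 1.\<close>
fun poisson_derived ::
  "('k::field \<Rightarrow> 'v::ab_group_add \<Rightarrow> 'v) \<Rightarrow> ('v \<Rightarrow> 'v \<Rightarrow> 'v) \<Rightarrow> ('v list \<Rightarrow> 'v) \<Rightarrow> nat \<Rightarrow> nat \<Rightarrow> 'v set"
where
  "poisson_derived scale mul br n 0 = UNIV"
| "poisson_derived scale mul br n (Suc k) =
     module.span scale
       ({br (a # b # cs) | a b cs. a \<in> poisson_derived scale mul br n k \<and>
            b \<in> poisson_derived scale mul br n k \<and> length cs = n - 2}
        \<union> {mul a b | a b. a \<in> poisson_derived scale mul br n k \<and>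
            b \<in> poisson_derived scale mul br n k})"

fun lie_derived ::
  "('k::field \<Rightarrow> 'v::ab_group_add \<Rightarrow> 'v) \<Rightarrow> ('v list \<Rightarrow> 'v) \<Rightarrow> nat \<Rightarrow> nat \<Rightarrow> 'v set"
where
  "lie_derived scale br n 0 = UNIV"
| "lie_derived scale br n (Suc k) =
     module.span scale
       {br (a # b # cs) | a b cs. a \<in> lie_derived scale br n k \<and>
            b \<in> lie_derived scale br n k \<and> length cs = n - 2}"

definition poisson_solvable where
  "poisson_solvable scale mul br n \<longleftrightarrow> (\<exists>s. poisson_derived scale mul br n s = {0})"

definition lie_solvable where
  "lie_solvable scale br n \<longleftrightarrow> (\<exists>s. lie_derived scale br n s = {0})"

definition assoc_nilpotent :: "('v::zero \<Rightarrow> 'v \<Rightarrow> 'v) \<Rightarrow> bool" where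
  "assoc_nilpotent mul \<longleftrightarrow>
     (\<exists>m\<ge>1. \<forall>xs. length xs = m \<longrightarrow> foldl mul (hd xs) (tl xs) = 0)"

end

theory Submission
  imports Defs
begin

text \<open>Write P^k for the powers of the associative algebra and P^(k), L^(k) for the two derived
  series. By the Leibniz rule every P^k is an ideal for the bracket, and a bracket with one argument
  in P^2 raises the power by one: [P^2, P^k, P, ..., P] \<subseteq> P^{k+1}. Hence P^(k) \<subseteq> L^(k) + P^2
  for all k, so if L^(s) = 0 then P^(s) \<subseteq> P^2, and from there on every step of the derived series
  goes one power deeper, P^(s+j) \<subseteq> P^{j+2}, which vanishes once P is nilpotent. Conversely
  L^(k) \<subseteq> P^(k), and every product of 2^k elements lies in P^(k).\<close>

definition mul_list :: "('v \<Rightarrow> 'v \<Rightarrow> 'v) \<Rightarrow> 'v list \<Rightarrow> 'v" where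
  "mul_list mul xs = foldl mul (hd xs) (tl xs)"

lemma foldl_assoc_left:
  assumes "\<And>x y z. mul (mul x y) z = mul x (mul y z)"
  shows "foldl mul (mul a b) xs = mul a (foldl mul b xs)"
  using assms by (induction xs arbitrary: b) simp_all

lemma mul_list_snoc: "xs \<noteq> [] \<Longrightarrow> mul_list mul (xs @ [y]) = mul (mul_list mul xs) y"
  by (cases xs) (simp_all add: mul_list_def)

lemma mul_list_append:
  assumes "\<And>x y z. mul (mul x y) z = mul x (mul y z)" and "xs \<noteq> []" and "ys \<noteq> []"
  shows "mul_list mul (xs @ ys) = mul (mul_list mul xs) (mul_list mul ys)"
proof -
  obtain y ys' where ys: "ys = y # ys'" using \<open>ys \<noteq> []\<close> by (cases ys) auto
  have "mul_list mul (xs @ ys) = foldl mul (mul (mul_list mul xs) y) ys'"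
    using \<open>xs \<noteq> []\<close> by (cases xs) (simp_all add: mul_list_def ys)
  also have "\<dots> = mul (mul_list mul xs) (mul_list mul ys)"
    using foldl_assoc_left[OF assms(1)] by (simp add: mul_list_def ys)
  finally show ?thesis .
qed

context vector_space
begin

lemma linear_add: "Vector_Spaces.linear scale scale f \<Longrightarrow> f (a + b) = f a + f b"
  by (metis linear_iff_module_hom module_hom.add)

lemma linear_mem_subspace_span:
  assumes "x \<in> span B" and "Vector_Spaces.linear scale scale f" and "subspace T"
    and "\<And>x. x \<in> B \<Longrightarrow> f x \<in> T"
  shows "f x \<in> T"
proof -
  have "subspace (f -` T)"
    using assms(2,3) linear_iff_module_hom module_hom.subspace_vimage by blast
  then show ?thesis
    using span_subspace_induct[OF assms(1)] assms(4) by blast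
qed

end

locale poisson_nLie_algebra = vector_space scale
  for scale :: "'k::field \<Rightarrow> 'v::ab_group_add \<Rightarrow> 'v" +
  fixes mul :: "'v \<Rightarrow> 'v \<Rightarrow> 'v" and br :: "'v list \<Rightarrow> 'v" and n :: nat
  assumes poisson_nLie: "poisson_nLie scale mul br n" and arity_ge_2: "n \<ge> 2"
begin

lemma mul_linear: "Vector_Spaces.linear scale scale (mul x)"
  using poisson_nLie unfolding poisson_nLie_def by (elim conjE) simp

lemma mul_commute: "mul x y = mul y x"
  using poisson_nLie unfolding poisson_nLie_def by (elim conjE) simp

lemma mul_assoc: "mul (mul x y) z = mul x (mul y z)"
  using poisson_nLie unfolding poisson_nLie_def by (elim conjE) simp

lemma bracket_linear:
  "length xs = n \<Longrightarrow> i < n \<Longrightarrow> Vector_Spaces.linear scale scale (\<lambda>x. br (xs[i := x]))"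
  using poisson_nLie unfolding poisson_nLie_def by (elim conjE) simp

lemma bracket_skew: "length xs = n \<Longrightarrow> i < n \<Longrightarrow> j < n \<Longrightarrow> i \<noteq> j \<Longrightarrow>
    br (xs[i := xs ! j, j := xs ! i]) = - br xs"
  using poisson_nLie unfolding poisson_nLie_def by (elim conjE) simp

lemma bracket_Leibniz: "length xs = n - 1 \<Longrightarrow>
    br (mul y z # xs) = mul y (br (z # xs)) + mul z (br (y # xs))"
  using poisson_nLie unfolding poisson_nLie_def by (elim conjE) simp

lemma bracket_linear_first: "length cs = n - 1 \<Longrightarrow> Vector_Spaces.linear scale scale (\<lambda>x. br (x # cs))"
  using bracket_linear[of "0 # cs" 0] arity_ge_2 by simp

lemma bracket_linear_second:
  "length cs = n - 2 \<Longrightarrow> Vector_Spaces.linear scale scale (\<lambda>x. br (c # x # cs))"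
  using bracket_linear[of "c # 0 # cs" 1] arity_ge_2 by simp

lemma bracket_swap: "length cs = n - 2 \<Longrightarrow> br (b # a # cs) = - br (a # b # cs)"
  using bracket_skew[of "a # b # cs" 0 1] arity_ge_2 by simp

text \<open>\<open>assoc_power k\<close> is the power P^{k+1}, spanned by the products of k + 1 elements.\<close>

fun assoc_power :: "nat \<Rightarrow> 'v set" where
  "assoc_power 0 = UNIV"
| "assoc_power (Suc k) = span {mul a b | a b. b \<in> assoc_power k}"

lemma subspace_assoc_power: "subspace (assoc_power k)"
  by (cases k) auto

lemma mul_mem_assoc_power: "b \<in> assoc_power k \<Longrightarrow> mul a b \<in> assoc_power (Suc k)"
  by (auto intro: span_base)

lemma mul_mem_assoc_power': "a \<in> assoc_power k \<Longrightarrow> mul a b \<in> assoc_power (Suc k)"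
  using mul_mem_assoc_power mul_commute by metis

lemma assoc_power_Suc_subset: "assoc_power (Suc k) \<subseteq> assoc_power k"
proof (induction k)
  case (Suc k)
  then have "{mul a b | a b. b \<in> assoc_power (Suc k)} \<subseteq> {mul a b | a b. b \<in> assoc_power k}"
    by blast
  then show ?case by (simp only: assoc_power.simps) (rule span_mono)
qed simp

lemma assoc_power_antimono: "i \<le> j \<Longrightarrow> assoc_power j \<subseteq> assoc_power i"
  by (rule lift_Suc_antimono_le[of assoc_power, OF assoc_power_Suc_subset])

lemma assoc_power_subset_span_mul_list:
  "assoc_power k \<subseteq> span {mul_list mul xs | xs. length xs = Suc k}"
proof (induction k)
  case 0
  have "x = mul_list mul [x]" for x by (simp add: mul_list_def)
  then show ?case by (force intro: span_base)
next
  case (Suc k)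
  have products: "mul a q \<in> span {mul_list mul xs | xs. length xs = Suc (Suc k)}"
    if q: "q \<in> {mul_list mul xs | xs. length xs = Suc k}" for a q
  proof -
    obtain xs where xs: "length xs = Suc k" "q = mul_list mul xs" using q by blast
    have "mul a q = mul q a" by (rule mul_commute)
    also have "\<dots> = mul_list mul (xs @ [a])"
      using mul_list_snoc[of xs mul a] xs by (cases xs) auto
    finally show ?thesis using xs by (intro span_base) force
  qed
  have "mul a b \<in> span {mul_list mul xs | xs. length xs = Suc (Suc k)}"
    if "b \<in> assoc_power k" for a b
  proof (rule linear_mem_subspace_span[OF _ mul_linear subspace_span])
    show "b \<in> span {mul_list mul xs | xs. length xs = Suc k}" using Suc.IH that by blast
  qed (rule products)
  then show ?case by (simp only: assoc_power.simps) (rule span_minimal, auto)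
qed

lemma assoc_power_eq_0:
  assumes "\<And>xs. length xs = Suc k \<Longrightarrow> mul_list mul xs = 0"
  shows "assoc_power k = {0}"
proof -
  have "{mul_list mul xs | xs. length xs = Suc k} \<subseteq> {0}"
    using assms by blast
  then have "span {mul_list mul xs | xs. length xs = Suc k} \<subseteq> {0}"
    by (rule span_minimal) simp
  then show ?thesis
    using assoc_power_subset_span_mul_list[of k] subspace_0[OF subspace_assoc_power, of k] by blast
qed

lemma bracket_mem_assoc_power:
  "length xs = n - 1 \<Longrightarrow> a \<in> assoc_power k \<Longrightarrow> br (a # xs) \<in> assoc_power k"
proof (induction k arbitrary: a)
  case (Suc k)
  have generator: "br (mul y z # xs) \<in> assoc_power (Suc k)" if z: "z \<in> assoc_power k" for y z
  proof -
    have "mul y (br (z # xs)) \<in> assoc_power (Suc k)"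
      using Suc.IH[OF Suc.prems(1) z] mul_mem_assoc_power by blast
    moreover have "mul z (br (y # xs)) \<in> assoc_power (Suc k)"
      using mul_mem_assoc_power' z by blast
    ultimately show ?thesis
      using bracket_Leibniz[OF Suc.prems(1)] subspace_add[OF subspace_assoc_power] by metis
  qed
  have "a \<in> span {mul y z | y z. z \<in> assoc_power k}"
    using Suc.prems(2) by simp
  then show ?case
    by (rule linear_mem_subspace_span[OF _ bracket_linear_first[OF Suc.prems(1)] subspace_assoc_power])
      (use generator in blast)
qed simp

lemma bracket_mem_assoc_power_second:
  assumes "length cs = n - 2" and "a \<in> assoc_power k"
  shows "br (c # a # cs) \<in> assoc_power k"
proof -
  have "br (a # c # cs) \<in> assoc_power k"
    using bracket_mem_assoc_power[of "c # cs"] assms arity_ge_2 by simp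
  then show ?thesis
    using bracket_swap[OF assms(1)] subspace_neg[OF subspace_assoc_power] by metis
qed

lemma bracket_square_mem_assoc_power:
  assumes cs: "length cs = n - 2" and a: "a \<in> assoc_power 1" and b: "b \<in> assoc_power k"
  shows "br (a # b # cs) \<in> assoc_power (Suc k)"
proof -
  have cs': "length (b # cs) = n - 1" using cs arity_ge_2 by simp
  have generator: "br (mul y z # b # cs) \<in> assoc_power (Suc k)" for y z
    using bracket_Leibniz[OF cs'] bracket_mem_assoc_power_second[OF cs b]
      mul_mem_assoc_power subspace_add[OF subspace_assoc_power] by metis
  have "a \<in> span {mul y z | y z. z \<in> assoc_power 0}"
    using a by simp
  then show ?thesis
    by (rule linear_mem_subspace_span[OF _ bracket_linear_first[OF cs'] subspace_assoc_power])
      (use generator in blast)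
qed

abbreviation "poisson_derived_series \<equiv> poisson_derived scale mul br n"
abbreviation "lie_derived_series \<equiv> lie_derived scale br n"

lemma subspace_lie_derived: "subspace (lie_derived_series k)"
  by (cases k) auto

lemma subspace_poisson_derived: "subspace (poisson_derived_series k)"
  by (cases k) auto

lemma poisson_derived_subset_lie_derived_plus_square:
  "poisson_derived_series k \<subseteq> {x + y | x y. x \<in> lie_derived_series k \<and> y \<in> assoc_power 1}"
proof (induction k)
  case 0
  have "x = x + 0" for x :: 'v by simp
  then show ?case using subspace_0[OF subspace_assoc_power] by fastforce
next
  case (Suc k)
  let ?T = "{x + y | x y. x \<in> lie_derived_series (Suc k) \<and> y \<in> assoc_power 1}"
  have bracket: "br (a # b # cs) \<in> ?T"
    if a_mem: "a \<in> poisson_derived_series k" and b_mem: "b \<in> poisson_derived_series k"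
      and cs: "length cs = n - 2" for a b cs
  proof -
    obtain l u where a: "a = l + u" "l \<in> lie_derived_series k" "u \<in> assoc_power 1"
      using a_mem Suc by blast
    obtain l' u' where b: "b = l' + u'" "l' \<in> lie_derived_series k" "u' \<in> assoc_power 1"
      using b_mem Suc by blast
    have cs': "length (b # cs) = n - 1" using cs arity_ge_2 by simp
    have "br (a # b # cs) = br (l # l' # cs) + (br (l # u' # cs) + br (u # b # cs))"
      using linear_add[OF bracket_linear_first[OF cs']] linear_add[OF bracket_linear_second[OF cs]]
        a(1) b(1) by (simp add: add.assoc)
    moreover have "br (l # l' # cs) \<in> lie_derived_series (Suc k)"
      using a b cs by (auto intro!: span_base)
    moreover have "br (l # u' # cs) + br (u # b # cs) \<in> assoc_power 1"
      using bracket_mem_assoc_power_second[OF cs b(3)] bracket_mem_assoc_power[OF cs' a(3)]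
        subspace_add[OF subspace_assoc_power] by blast
    ultimately show ?thesis by blast
  qed
  have product: "mul a b \<in> ?T" for a b
  proof -
    have "mul a b \<in> assoc_power 1" using mul_mem_assoc_power[of b 0 a] by simp
    then show ?thesis
      using subspace_0[OF subspace_lie_derived[of "Suc k"]] by force
  qed
  show ?case
    by (simp only: poisson_derived.simps)
      (rule span_minimal[OF _ subspace_sums[OF subspace_lie_derived subspace_assoc_power]],
       use bracket product in blast)
qed

lemma poisson_derived_add_subset_assoc_power:
  assumes "poisson_derived_series s \<subseteq> assoc_power 1"
  shows "poisson_derived_series (s + j) \<subseteq> assoc_power (Suc j)"
proof (induction j)
  case (Suc j)
  have "assoc_power (Suc j) \<subseteq> assoc_power 1" by (rule assoc_power_antimono) simp
  then have "{br (a # b # cs) | a b cs. a \<in> poisson_derived_series (s + j) \<and>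
                b \<in> poisson_derived_series (s + j) \<and> length cs = n - 2}
      \<union> {mul a b | a b. a \<in> poisson_derived_series (s + j) \<and> b \<in> poisson_derived_series (s + j)}
      \<subseteq> assoc_power (Suc (Suc j))"
    using bracket_square_mem_assoc_power Suc mul_mem_assoc_power by blast
  then show ?case
    by (simp only: add_Suc_right poisson_derived.simps)
      (rule span_minimal, simp_all add: subspace_assoc_power)
qed (use assms in simp)

lemma lie_derived_subset_poisson_derived: "lie_derived_series k \<subseteq> poisson_derived_series k"
proof (induction k)
  case (Suc k)
  then show ?case
    by (simp only: poisson_derived.simps lie_derived.simps) (rule span_mono, blast)
qed simp

lemma mul_list_mem_poisson_derived:
  "length xs = 2 ^ k \<Longrightarrow> mul_list mul xs \<in> poisson_derived_series k"
proof (induction k arbitrary: xs)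
  case (Suc k)
  let ?ys = "take (2 ^ k) xs" and ?zs = "drop (2 ^ k) xs"
  have "length ?ys = 2 ^ k" "length ?zs = 2 ^ k" using Suc.prems by auto
  moreover from this have "?ys \<noteq> []" "?zs \<noteq> []" by (auto simp del: length_drop length_take)
  ultimately have "mul_list mul xs = mul (mul_list mul ?ys) (mul_list mul ?zs)"
    and "mul_list mul ?ys \<in> poisson_derived_series k" "mul_list mul ?zs \<in> poisson_derived_series k"
    using mul_list_append[OF mul_assoc, of ?ys ?zs] Suc.IH by auto
  then show ?case by (auto intro!: span_base)
qed simp

lemma poisson_solvable_imp_lie_solvable:
  "poisson_solvable scale mul br n \<Longrightarrow> lie_solvable scale br n"
  unfolding poisson_solvable_def lie_solvable_def
  using lie_derived_subset_poisson_derived subspace_0[OF subspace_lie_derived] by blast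

lemma poisson_solvable_imp_assoc_nilpotent:
  assumes "poisson_solvable scale mul br n"
  shows "assoc_nilpotent mul"
proof -
  obtain s where "poisson_derived_series s = {0}"
    using assms unfolding poisson_solvable_def by blast
  then have "length xs = 2 ^ s \<longrightarrow> foldl mul (hd xs) (tl xs) = 0" for xs
    using mul_list_mem_poisson_derived by (auto simp: mul_list_def)
  then show ?thesis
    unfolding assoc_nilpotent_def by (intro exI[of _ "2 ^ s"]) simp
qed

lemma poisson_solvable_if_lie_solvable_assoc_nilpotent:
  assumes "lie_solvable scale br n" and "assoc_nilpotent mul"
  shows "poisson_solvable scale mul br n"
proof -
  obtain s where "lie_derived_series s = {0}"
    using assms(1) unfolding lie_solvable_def by blast
  then have "poisson_derived_series s \<subseteq> assoc_power 1"
    using poisson_derived_subset_lie_derived_plus_square[of s] by auto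
  then have "poisson_derived_series (s + m) \<subseteq> assoc_power (Suc m)" for m
    by (rule poisson_derived_add_subset_assoc_power)
  moreover obtain m where "m \<ge> 1" "\<And>xs. length xs = m \<Longrightarrow> mul_list mul xs = 0"
    using assms(2) unfolding assoc_nilpotent_def mul_list_def by blast
  then have "assoc_power (m - 1) = {0}"
    by (intro assoc_power_eq_0) simp
  moreover have "assoc_power (Suc m) \<subseteq> assoc_power (m - 1)"
    by (rule assoc_power_antimono) simp
  ultimately have "poisson_derived_series (s + m) = {0}"
    using subspace_0[OF subspace_poisson_derived] by blast
  then show ?thesis
    unfolding poisson_solvable_def by blast
qed

end

theorem corollary5p10:
  fixes scale :: "'k::field_char_0 \<Rightarrow> 'v::ab_group_add \<Rightarrow> 'v"
    and mul :: "'v \<Rightarrow> 'v \<Rightarrow> 'v"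
    and br :: "'v list \<Rightarrow> 'v"
    and n :: nat
  assumes "alg_closed TYPE('k)"
    and "n \<ge> 2"
    and "poisson_nLie scale mul br n"
    and "\<exists>B. finite B \<and> module.span scale B = UNIV"
  shows "poisson_solvable scale mul br n \<longleftrightarrow>
           lie_solvable scale br n \<and> assoc_nilpotent mul"
proof -
  have "vector_space scale"
    using assms(3) unfolding poisson_nLie_def by (elim conjE) simp
  then interpret poisson_nLie_algebra scale mul br n
    using assms(2,3) by (simp add: poisson_nLie_algebra_def poisson_nLie_algebra_axioms_def)
  show ?thesis
    using poisson_solvable_imp_lie_solvable poisson_solvable_imp_assoc_nilpotent
      poisson_solvable_if_lie_solvable_assoc_nilpotent by blast
qed

end
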